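(* For every integral domain $D$ and semistar operation $\star$ on $D$, $$\widetilde{\star}\text{-}\dim_v(D)=\sup\{\dim(T)\mid T\text{ is a }(\star,d_T)\text{-linked overring of }D\}.$$
   Context: $D$ is an integral domain with quotient field $K$; $f(D)$ denotes nonzero finitely generated fractional ideals, $\overline{\mathcal F}(D)$ nonzero $D$-submodules of $K$. A semistar operation $\star$ on $D$ is a map $\overline{\mathcal F}(D)\to\overline{\mathcal F}(D)$ with $(xE)^\star=xE^\star$ ($0\neq x\in K$), $E\subseteq F\Rightarrow E^\star\subseteq F^\star$, $E\subseteq E^\star=(E^\star)^\star$. $E^{\star_f}:=\bigcup\{F^\star:F\in f(D),F\subseteq E\}$. A nonzero ideal $I$ is a quasi-$\star_f$-ideal if $I^{\star_f}\cap D=I$; $\operatorname{QMax}^{\star_f}(D)$ is the set of maximal proper quasi-$\star_f$-ideals. $E^{\widetilde\star}:=\bigcap\{ED_M:M\in\operatorname{QMax}^{\star_f}(D)\}$ ($=K$ if empty). A valuation overring $V$ of $D$ is a $\widetilde\star$-valuation overring if $F^{\widetilde\star}\subseteq FV$ for all $F\in f(D)$; $\widetilde\star$-$\dim_v(D):=\sup\{\dim V\}$ over $\widetilde\star$-valuation overrings. An overring $T$ of $D$ ($D\subseteq T\subseteq K$) is $(\star,d_T)$-linked to $D$ if for every nonzero finitely generated ideal $F$ of $D$ with $F^\star=D^\star$ one has $FT=T$. *)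

theory Defs
  imports Main "HOL-Library.Extended_Nat"
begin

text \<open>Ambient field K is the whole type 'a; D is a subring of K with quotient field K.\<close>

definition subring :: "'a::field set \<Rightarrow> bool" where
  "subring R \<longleftrightarrow> 0 \<in> R \<and> 1 \<in> R \<and> (\<forall>x\<in>R. \<forall>y\<in>R. x + y \<in> R \<and> x - y \<in> R \<and> x * y \<in> R)"

definition quotient_field_is_UNIV :: "'a::field set \<Rightarrow> bool" where
  "quotient_field_is_UNIV D \<longleftrightarrow> (\<forall>k. \<exists>a\<in>D. \<exists>b\<in>D. b \<noteq> 0 \<and> k = a / b)"

definition genset :: "'a::field set \<Rightarrow> 'a set \<Rightarrow> 'a set" where
  "genset E T = {x. \<exists>(n::nat) e t. x = (\<Sum>i<n. e i * t i) \<and> (\<forall>i<n. e i \<in> E \<and> t i \<in> T)}"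

definition scale :: "'a::field \<Rightarrow> 'a set \<Rightarrow> 'a set" where
  "scale x E = (\<lambda>e. x * e) ` E"

definition Fbar :: "'a::field set \<Rightarrow> 'a set set" where
  "Fbar D = {E. 0 \<in> E \<and> E \<noteq> {0} \<and> (\<forall>x\<in>E. \<forall>y\<in>E. x + y \<in> E) \<and> (\<forall>d\<in>D. \<forall>x\<in>E. d * x \<in> E)}"

definition fD :: "'a::field set \<Rightarrow> 'a set set" where
  "fD D = {F. \<exists>G. finite G \<and> F = genset G D \<and> F \<noteq> {0}}"

definition semistar :: "'a::field set \<Rightarrow> ('a set \<Rightarrow> 'a set) \<Rightarrow> bool" where
  "semistar D st \<longleftrightarrow>
     (\<forall>E\<in>Fbar D. st E \<in> Fbar D) \<and>
     (\<forall>E\<in>Fbar D. \<forall>x. x \<noteq> 0 \<longrightarrow> st (scale x E) = scale x (st E)) \<and>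
     (\<forall>E\<in>Fbar D. \<forall>F\<in>Fbar D. E \<subseteq> F \<longrightarrow> st E \<subseteq> st F) \<and>
     (\<forall>E\<in>Fbar D. E \<subseteq> st E \<and> st (st E) = st E)"

definition star_f :: "'a::field set \<Rightarrow> ('a set \<Rightarrow> 'a set) \<Rightarrow> 'a set \<Rightarrow> 'a set" where
  "star_f D st E = \<Union>{st F | F. F \<in> fD D \<and> F \<subseteq> E}"

definition quasi_star_f_ideal :: "'a::field set \<Rightarrow> ('a set \<Rightarrow> 'a set) \<Rightarrow> 'a set \<Rightarrow> bool" where
  "quasi_star_f_ideal D st I \<longleftrightarrow> I \<in> Fbar D \<and> I \<subseteq> D \<and> star_f D st I \<inter> D = I"

definition QMax :: "'a::field set \<Rightarrow> ('a set \<Rightarrow> 'a set) \<Rightarrow> 'a set set" where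
  "QMax D st = {M. quasi_star_f_ideal D st M \<and> M \<noteq> D \<and>
      (\<forall>J. quasi_star_f_ideal D st J \<and> J \<noteq> D \<and> M \<subseteq> J \<longrightarrow> J = M)}"

definition localization :: "'a::field set \<Rightarrow> 'a set \<Rightarrow> 'a set" where
  "localization D M = {a / s | a s. a \<in> D \<and> s \<in> D \<and> s \<notin> M}"

text \<open>The stable semistar operation; the intersection over an empty family is K = UNIV.\<close>
definition star_tilde :: "'a::field set \<Rightarrow> ('a set \<Rightarrow> 'a set) \<Rightarrow> 'a set \<Rightarrow> 'a set" where
  "star_tilde D st E = (\<Inter>M\<in>QMax D st. genset E (localization D M))"

definition overring :: "'a::field set \<Rightarrow> 'a set \<Rightarrow> bool" where
  "overring D T \<longleftrightarrow> subring T \<and> D \<subseteq> T"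

definition valuation_overring :: "'a::field set \<Rightarrow> 'a set \<Rightarrow> bool" where
  "valuation_overring D V \<longleftrightarrow> overring D V \<and> (\<forall>x. x \<noteq> 0 \<longrightarrow> x \<in> V \<or> inverse x \<in> V)"

definition star_tilde_valuation_overring :: "'a::field set \<Rightarrow> ('a set \<Rightarrow> 'a set) \<Rightarrow> 'a set \<Rightarrow> bool" where
  "star_tilde_valuation_overring D st V \<longleftrightarrow> valuation_overring D V \<and>
     (\<forall>F\<in>fD D. star_tilde D st F \<subseteq> genset F V)"

definition prime_ideal :: "'a::field set \<Rightarrow> 'a set \<Rightarrow> bool" where
  "prime_ideal R P \<longleftrightarrow> P \<subseteq> R \<and> 0 \<in> P \<and> P \<noteq> R \<and>
     (\<forall>x\<in>P. \<forall>y\<in>P. x + y \<in> P) \<and> (\<forall>r\<in>R. \<forall>x\<in>P. r * x \<in> P) \<and>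
     (\<forall>a\<in>R. \<forall>b\<in>R. a * b \<in> P \<longrightarrow> a \<in> P \<or> b \<in> P)"

definition krull_dim :: "'a::field set \<Rightarrow> enat" where
  "krull_dim R = Sup {enat n | n. \<exists>P. (\<forall>i\<le>n. prime_ideal R (P i)) \<and> (\<forall>i<n. P i \<subset> P (Suc i))}"

definition star_tilde_dim_v :: "'a::field set \<Rightarrow> ('a set \<Rightarrow> 'a set) \<Rightarrow> enat" where
  "star_tilde_dim_v D st = Sup {krull_dim V | V. star_tilde_valuation_overring D st V}"

definition star_linked :: "'a::field set \<Rightarrow> ('a set \<Rightarrow> 'a set) \<Rightarrow> 'a set \<Rightarrow> bool" where
  "star_linked D st T \<longleftrightarrow> overring D T \<and>
     (\<forall>F. F \<in> fD D \<and> F \<subseteq> D \<and> st F = st D \<longrightarrow> genset F T = T)"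

end

theory Submission
  imports Defs
begin

text \<open>
  The proof compares the two families directly:

  \<^item> every \<open>\<star>\<^sup>~\<close>-valuation overring is itself linked, which gives \<open>\<le>\<close>;
  \<^item> every valuation ring \<open>V\<close> containing a linked overring \<open>T\<close> is a \<open>\<star>\<^sup>~\<close>-valuation overring
    (its centre on \<open>D\<close> lies in a quasi-\<open>\<star>\<^sub>f\<close>-maximal ideal \<open>M\<close>, so \<open>D\<^sub>M \<subseteq> V\<close>), and every
    chain of primes of \<open>T\<close> of length \<open>n\<close> is the trace of a chain of primes of a valuation
    ring \<open>V \<supseteq> T\<close>; this gives \<open>\<ge>\<close>.
\<close>

section \<open>Subrings and the modules they generate\<close>

lemma subringD:
  assumes "subring R"
  shows "0 \<in> R" "1 \<in> R" "x \<in> R \<Longrightarrow> y \<in> R \<Longrightarrow> x + y \<in> R"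
    "x \<in> R \<Longrightarrow> y \<in> R \<Longrightarrow> x - y \<in> R" "x \<in> R \<Longrightarrow> y \<in> R \<Longrightarrow> x * y \<in> R"
  using assms unfolding subring_def by auto

lemma subring_uminus: "subring R \<Longrightarrow> x \<in> R \<Longrightarrow> - x \<in> R"
  using subringD(4)[of R 0 x] subringD(1)[of R] by simp

text \<open>A finite subset of the union of a nonempty chain of sets lies in one member of the chain.
  This is what makes all the Zorn's-lemma arguments below work.\<close>

lemma finite_subset_Union_chain:
  assumes "finite G" "C \<noteq> {}" "\<And>X Y. X \<in> C \<Longrightarrow> Y \<in> C \<Longrightarrow> X \<subseteq> Y \<or> Y \<subseteq> X" "G \<subseteq> \<Union>C"
  shows "\<exists>J\<in>C. G \<subseteq> J"
  using assms(1,4)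
proof (induction G rule: finite_induct)
  case empty thus ?case using assms(2) by blast
next
  case (insert g G)
  then obtain J where J: "J \<in> C" "G \<subseteq> J" by blast
  obtain J' where J': "J' \<in> C" "g \<in> J'" using insert.prems by blast
  show ?case
  proof (cases "J \<subseteq> J'")
    case True thus ?thesis using J J' by blast
  next
    case False hence "J' \<subseteq> J" using assms(3)[OF J(1) J'(1)] by blast
    thus ?thesis using J J' by blast
  qed
qed

lemma subring_Union_chain:
  assumes "C \<noteq> {}" "\<And>X Y. X \<in> C \<Longrightarrow> Y \<in> C \<Longrightarrow> X \<subseteq> Y \<or> Y \<subseteq> X" "\<And>R. R \<in> C \<Longrightarrow> subring R"
  shows "subring (\<Union>C)"
  unfolding subring_def
proof (intro conjI ballI)
  obtain R0 where "R0 \<in> C" using assms(1) by blast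
  thus "0 \<in> \<Union>C" "1 \<in> \<Union>C" using assms(3) subringD by blast+
  fix x y assume "x \<in> \<Union>C" "y \<in> \<Union>C"
  then obtain Z where Z: "Z \<in> C" "{x, y} \<subseteq> Z"
    using finite_subset_Union_chain[OF _ assms(1,2), of "{x, y}"] by blast
  have "x + y \<in> Z" "x - y \<in> Z" "x * y \<in> Z" using subringD[OF assms(3)[OF Z(1)]] Z(2) by auto
  thus "x + y \<in> \<Union>C" "x - y \<in> \<Union>C" "x * y \<in> \<Union>C" using Z(1) by blast+
qed

lemma gensetE:
  assumes "x \<in> genset E T"
  obtains n e t where "x = (\<Sum>i<(n::nat). e i * t i)" "\<forall>i<n. e i \<in> E \<and> t i \<in> T"
  using assms unfolding genset_def by blast

lemma genset_zero: "0 \<in> genset E T"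
  unfolding genset_def by (rule CollectI, rule exI[of _ 0]) auto

lemma genset_single: "e \<in> E \<Longrightarrow> t \<in> T \<Longrightarrow> e * t \<in> genset E T"
  unfolding genset_def
  by (rule CollectI, rule exI[of _ 1], rule exI[of _ "\<lambda>_. e"], rule exI[of _ "\<lambda>_. t"]) auto

lemma genset_least:
  assumes "0 \<in> X" "\<And>x y. x \<in> X \<Longrightarrow> y \<in> X \<Longrightarrow> x + y \<in> X"
    "\<And>e t. e \<in> E \<Longrightarrow> t \<in> T \<Longrightarrow> e * t \<in> X"
  shows "genset E T \<subseteq> X"
proof
  fix x assume "x \<in> genset E T"
  then obtain n :: nat and e t where x: "x = (\<Sum>i<n. e i * t i)" and et: "\<forall>i<n. e i \<in> E \<and> t i \<in> T"
    by (rule gensetE)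
  have "(\<Sum>i<m. e i * t i) \<in> X" if "m \<le> n" for m
    using that by (induction m) (auto simp: assms et)
  thus "x \<in> X" using x by auto
qed

lemma genset_add_single:
  assumes "x \<in> genset E T" "e0 \<in> E" "t0 \<in> T"
  shows "x + e0 * t0 \<in> genset E T"
proof -
  obtain n :: nat and e t where x: "x = (\<Sum>i<n. e i * t i)" and et: "\<forall>i<n. e i \<in> E \<and> t i \<in> T"
    using assms(1) by (rule gensetE)
  define e' where "e' = e(n := e0)"
  define t' where "t' = t(n := t0)"
  have "(\<Sum>i<Suc n. e' i * t' i) = (\<Sum>i<n. e i * t i) + e0 * t0"
    by (simp add: e'_def t'_def)
  moreover have "\<forall>i<Suc n. e' i \<in> E \<and> t' i \<in> T"
    using et assms by (auto simp: e'_def t'_def less_Suc_eq)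
  ultimately show ?thesis unfolding genset_def x
    by (intro CollectI exI[of _ "Suc n"] exI[of _ e'] exI[of _ t'] conjI) simp_all
qed

lemma genset_add:
  assumes "x \<in> genset E T" "y \<in> genset E T"
  shows "x + y \<in> genset E T"
proof -
  obtain n :: nat and e t where y: "y = (\<Sum>i<n. e i * t i)" and et: "\<forall>i<n. e i \<in> E \<and> t i \<in> T"
    using assms(2) by (rule gensetE)
  have "x + (\<Sum>i<m. e i * t i) \<in> genset E T" if "m \<le> n" for m
    using that
  proof (induction m)
    case (Suc m)
    hence "x + (\<Sum>i<m. e i * t i) + e m * t m \<in> genset E T"
      using et by (intro genset_add_single) auto
    thus ?case by (simp add: add.assoc)
  qed (simp add: assms(1))
  thus ?thesis using y by auto
qed

lemma genset_mult_left:
  assumes "x \<in> genset E T" "subring T" "s \<in> T"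
  shows "s * x \<in> genset E T"
proof -
  have "genset E T \<subseteq> {x. s * x \<in> genset E T}"
  proof (rule genset_least)
    fix e t assume "e \<in> E" "t \<in> T"
    thus "e * t \<in> {x. s * x \<in> genset E T}"
      using genset_single[of e E "s * t" T] subringD(5)[OF assms(2,3)] by (simp add: mult_ac)
  qed (auto simp: genset_zero genset_add distrib_left)
  thus ?thesis using assms(1) by blast
qed

lemma genset_mono: "E \<subseteq> E' \<Longrightarrow> T \<subseteq> T' \<Longrightarrow> genset E T \<subseteq> genset E' T'"
  by (rule genset_least) (auto intro: genset_zero genset_add genset_single)

lemma genset_gen: "subring T \<Longrightarrow> e \<in> E \<Longrightarrow> e \<in> genset E T"
  using genset_single[of e E 1 T] subringD(2) by auto

lemma genset_supset: "subring T \<Longrightarrow> E \<subseteq> genset E T"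
  using genset_gen by blast

lemma genset_sub_ring: "subring R \<Longrightarrow> E \<subseteq> R \<Longrightarrow> T \<subseteq> R \<Longrightarrow> genset E T \<subseteq> R"
  by (rule genset_least) (auto intro: subringD)

lemma genset_one_ring:
  assumes "1 \<in> genset E T" "subring T" "E \<subseteq> T"
  shows "genset E T = T"
proof
  show "genset E T \<subseteq> T" using assms by (intro genset_sub_ring) auto
  show "T \<subseteq> genset E T" using genset_mult_left[OF assms(1,2)] by auto
qed

lemma genset_UNIV:
  assumes "F \<noteq> {0}" "0 \<in> F" shows "genset F UNIV = UNIV"
proof -
  obtain f where f: "f \<in> F" "f \<noteq> 0" using assms by blast
  have "f * (k / f) \<in> genset F UNIV" for k using genset_single[OF f(1)] by blast
  thus ?thesis using f(2) by auto
qed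

lemma genset_Union_chain:
  assumes "C \<noteq> {}" "\<And>X Y. X \<in> C \<Longrightarrow> Y \<in> C \<Longrightarrow> X \<subseteq> Y \<or> Y \<subseteq> X"
    "x \<in> genset E (\<Union>C)"
  shows "\<exists>R\<in>C. x \<in> genset E R"
proof -
  obtain n :: nat and e t where x: "x = (\<Sum>i<n. e i * t i)" and et: "\<forall>i<n. e i \<in> E \<and> t i \<in> \<Union>C"
    using assms(3) by (rule gensetE)
  obtain R where "R \<in> C" "t ` {..<n} \<subseteq> R"
    using finite_subset_Union_chain[OF _ assms(1,2), of "t ` {..<n}"] et by blast
  thus ?thesis using x et unfolding genset_def by blast
qed

section \<open>Valuation rings and their maximal ideals\<close>

definition valring :: "'a::field set \<Rightarrow> bool" where
  "valring V \<longleftrightarrow> subring V \<and> (\<forall>x. x \<noteq> 0 \<longrightarrow> x \<in> V \<or> inverse x \<in> V)"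

definition mV :: "'a::field set \<Rightarrow> 'a set" where
  "mV V = {x \<in> V. x = 0 \<or> inverse x \<notin> V}"

lemma valuation_overring_iff: "valuation_overring D V \<longleftrightarrow> valring V \<and> D \<subseteq> V"
  unfolding valuation_overring_def valring_def overring_def by auto

lemma valring_subring: "valring V \<Longrightarrow> subring V"
  unfolding valring_def by blast

lemma valring_UNIV: "valring UNIV"
  unfolding valring_def subring_def by auto

lemma mV_UNIV: "mV UNIV = {0}"
  unfolding mV_def by auto

lemma mV_sub: "mV V \<subseteq> V"
  unfolding mV_def by auto

lemma mV_one: "1 \<notin> mV V"
  unfolding mV_def by simp

lemma mV_zero: "valring V \<Longrightarrow> 0 \<in> mV V"
  unfolding mV_def valring_def using subringD by auto

lemma valring_unit: "s \<in> V \<Longrightarrow> s \<notin> mV V \<Longrightarrow> inverse s \<in> V"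
  unfolding mV_def by auto

lemma mV_add:
  assumes V: "valring V" and x: "x \<in> mV V" and y: "y \<in> mV V"
  shows "x + y \<in> mV V"
proof (cases "x = 0 \<or> y = 0 \<or> x + y = 0")
  case True thus ?thesis using x y mV_zero[OF V] by auto
next
  case False
  hence nz: "x \<noteq> 0" "y \<noteq> 0" "x + y \<noteq> 0" by auto
  have sub: "subring V" using V valring_def by auto
  have ix: "inverse x \<notin> V" and iy: "inverse y \<notin> V" using x y nz unfolding mV_def by auto
  have xy: "x + y \<in> V" using subringD(3)[OF sub] x y mV_sub by blast
  show ?thesis
  proof (rule ccontr)
    assume "x + y \<notin> mV V"
    hence ixy: "inverse (x + y) \<in> V" using xy unfolding mV_def by auto
    have "y / x \<noteq> 0" using nz by simp
    hence "y / x \<in> V \<or> inverse (y / x) \<in> V" using V unfolding valring_def by blast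
    hence "y / x \<in> V \<or> x / y \<in> V" by simp
    thus False
    proof
      assume "y / x \<in> V"
      hence "(1 + y / x) * inverse (x + y) \<in> V" using ixy subringD[OF sub] by metis
      moreover have "inverse x = (1 + y / x) * inverse (x + y)" using nz by (simp add: field_simps)
      ultimately show False using ix by simp
    next
      assume "x / y \<in> V"
      hence "(1 + x / y) * inverse (x + y) \<in> V" using ixy subringD[OF sub] by metis
      moreover have "inverse y = (1 + x / y) * inverse (x + y)" using nz by (simp add: field_simps)
      ultimately show False using iy by simp
    qed
  qed
qed

lemma mV_mult:
  assumes V: "valring V" and r: "r \<in> V" and x: "x \<in> mV V"
  shows "r * x \<in> mV V"
proof (cases "r * x = 0")
  case True thus ?thesis by (simp only: True mV_zero[OF V])
next
  case False
  have sub: "subring V" using V valring_def by auto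
  have "inverse (r * x) \<notin> V"
  proof
    assume "inverse (r * x) \<in> V"
    hence "r * inverse (r * x) \<in> V" using subringD(5)[OF sub r] by blast
    moreover have "r * inverse (r * x) = inverse x" using False by (simp add: field_simps)
    ultimately have "inverse x \<in> V" by metis
    thus False using x False unfolding mV_def by auto
  qed
  thus ?thesis using subringD(5)[OF sub r] x mV_sub unfolding mV_def by blast
qed

lemma mV_diff:
  assumes V: "valring V" and "m \<in> mV V" "m' \<in> mV V" shows "m - m' \<in> mV V"
proof -
  have "- 1 \<in> V" using subring_uminus[OF valring_subring[OF V] subringD(2)] V valring_subring by blast
  thus ?thesis using mV_add[OF V assms(2) mV_mult[OF V \<open>- 1 \<in> V\<close> assms(3)]] by simp
qed

lemma mV_cross_terms:
  assumes W: "valring W" and t: "t \<in> W" "t' \<in> W" and m: "m \<in> mV W" "m' \<in> mV W"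
  shows "t * m' + t' * m + m * m' \<in> mV W"
  using mV_add[OF W mV_add[OF W mV_mult[OF W t(1) m(2)] mV_mult[OF W t(2) m(1)]]
      mV_mult[OF W _ m(2)]] m(1) mV_sub by blast

lemma prime_idealD:
  assumes "prime_ideal S Q"
  shows "Q \<subseteq> S" "0 \<in> Q" "x \<in> Q \<Longrightarrow> y \<in> Q \<Longrightarrow> x + y \<in> Q" "r \<in> S \<Longrightarrow> x \<in> Q \<Longrightarrow> r * x \<in> Q"
    "a \<in> S \<Longrightarrow> b \<in> S \<Longrightarrow> a * b \<in> Q \<Longrightarrow> a \<in> Q \<or> b \<in> Q"
  using assms unfolding prime_ideal_def by blast+

lemma prime_one: "prime_ideal R P \<Longrightarrow> 1 \<in> R \<Longrightarrow> 1 \<notin> P"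
  unfolding prime_ideal_def by (metis mult.right_neutral subsetI subset_antisym)

lemma mV_prime: assumes V: "valring V" shows "prime_ideal V (mV V)"
proof -
  have sub: "subring V" using V valring_def by auto
  have "a \<in> mV V \<or> b \<in> mV V" if ab: "a \<in> V" "b \<in> V" "a * b \<in> mV V" for a b
  proof (rule ccontr)
    assume "\<not> ?thesis"
    hence "a \<noteq> 0" "b \<noteq> 0" "inverse a \<in> V" "inverse b \<in> V" using ab(1,2) unfolding mV_def by auto
    hence "a * b \<noteq> 0" "inverse (a * b) \<in> V" using subringD(5)[OF sub]
      by (auto simp: inverse_mult_distrib)
    thus False using ab(3) unfolding mV_def by auto
  qed
  moreover have "mV V \<noteq> V" using mV_one subringD(2)[OF sub] by blast
  ultimately show ?thesis unfolding prime_ideal_def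
    by (intro conjI ballI impI mV_sub mV_zero[OF V] mV_add[OF V] mV_mult[OF V]) simp_all
qed

text \<open>Every prime ideal of a subring \<open>W\<close> consists of non-units, so lies in \<^term>\<open>mV W\<close>.\<close>

lemma prime_sub_mV:
  assumes "subring W" "prime_ideal W Q" shows "Q \<subseteq> mV W"
proof
  fix q assume q: "q \<in> Q"
  have qW: "q \<in> W" using prime_idealD(1)[OF assms(2)] q by blast
  show "q \<in> mV W"
  proof (rule ccontr)
    assume "q \<notin> mV W"
    hence "q \<noteq> 0" "inverse q \<in> W" using qW unfolding mV_def by auto
    have "inverse q * q \<in> Q" using prime_idealD(4)[OF assms(2) \<open>inverse q \<in> W\<close> q] .
    moreover have "inverse q * q = 1" using \<open>q \<noteq> 0\<close> by simp
    ultimately show False using prime_one[OF assms(2) subringD(2)[OF assms(1)]] by metis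
  qed
qed

lemma mV_anti:
  assumes "valring V" "V \<subseteq> W" shows "mV W \<subseteq> mV V"
proof
  fix x assume x: "x \<in> mV W"
  show "x \<in> mV V"
  proof (cases "x = 0")
    case True thus ?thesis using mV_zero assms by auto
  next
    case False
    hence "inverse x \<notin> V" using x assms(2) unfolding mV_def by auto
    moreover hence "x \<in> V" using assms False valring_def by auto
    ultimately show ?thesis unfolding mV_def by auto
  qed
qed

lemma prime_down:
  assumes V: "valring V" and W: "valring W" and VW: "V \<subseteq> W" and Q: "prime_ideal W Q"
  shows "prime_ideal V Q"
proof -
  have "Q \<subseteq> mV V" using prime_sub_mV[OF valring_subring[OF W] Q] mV_anti[OF V VW] by blast
  hence "Q \<subseteq> V" "Q \<noteq> V" using mV_sub mV_one subringD(2)[OF valring_subring[OF V]] by blast+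
  thus ?thesis using Q VW unfolding prime_ideal_def by blast
qed

lemma localization_sub_valring:
  assumes V: "valring V" and DV: "D \<subseteq> V" and centre: "mV V \<inter> D \<subseteq> M"
  shows "localization D M \<subseteq> V"
proof
  fix y assume "y \<in> localization D M"
  then obtain a s where y: "y = a / s" "a \<in> D" "s \<in> D" "s \<notin> M" unfolding localization_def by blast
  have "inverse s \<in> V" using valring_unit[of s V] y DV centre by blast
  hence "a * inverse s \<in> V" using subringD(5)[OF valring_subring[OF V]] y DV by blast
  thus "y \<in> V" using y by (simp add: divide_inverse)
qed

section \<open>Polynomial expressions and the key lemma of Chevalley's theorem\<close>

definition ring_module :: "'a::field set \<Rightarrow> 'a set \<Rightarrow> bool" where
  "ring_module R C \<longleftrightarrow> 0 \<in> C \<and> (\<forall>a\<in>C. \<forall>b\<in>C. a + b \<in> C) \<and> (\<forall>r\<in>R. \<forall>a\<in>C. r * a \<in> C)"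

text \<open>Values at \<open>x\<close> of polynomials of degree \<open>< k\<close> with coefficients in \<open>C\<close>, and of all
  polynomials with coefficients in \<open>C\<close>; for a ring \<open>R\<close>, \<^term>\<open>polys R x\<close> is the ring \<open>R[x]\<close>.\<close>

definition polys_below :: "'a::field set \<Rightarrow> 'a \<Rightarrow> nat \<Rightarrow> 'a set" where
  "polys_below C x k = {v. \<exists>c. (\<forall>i. c i \<in> C) \<and> v = (\<Sum>i<k. c i * x ^ i)}"

definition polys :: "'a::field set \<Rightarrow> 'a \<Rightarrow> 'a set" where
  "polys C x = (\<Union>k. polys_below C x k)"

lemma polys_belowI: "(\<And>i. c i \<in> C) \<Longrightarrow> v = (\<Sum>i<k. c i * x ^ i) \<Longrightarrow> v \<in> polys_below C x k"
  unfolding polys_below_def by blast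

lemma polys_belowE:
  assumes "v \<in> polys_below C x k"
  obtains c where "\<forall>i. c i \<in> C" "v = (\<Sum>i<k. c i * x ^ i)"
  using assms unfolding polys_below_def by blast

context
  fixes R C :: "'a::field set"
  assumes M: "ring_module R C"
begin

lemma polys_below_zero: "0 \<in> polys_below C x k"
  using M by (intro polys_belowI[of "\<lambda>_. 0"]) (auto simp: ring_module_def)

lemma polys_below_add: "p \<in> polys_below C x k \<Longrightarrow> q \<in> polys_below C x k \<Longrightarrow> p + q \<in> polys_below C x k"
  by (elim polys_belowE, rule polys_belowI[of "\<lambda>i. _ i + _ i"])
    (use M in \<open>auto simp: ring_module_def sum.distrib distrib_right\<close>)

lemma polys_below_smult: "r \<in> R \<Longrightarrow> p \<in> polys_below C x k \<Longrightarrow> r * p \<in> polys_below C x k"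
  by (elim polys_belowE, rule polys_belowI[of "\<lambda>i. r * _ i"])
    (use M in \<open>auto simp: ring_module_def sum_distrib_left mult.assoc\<close>)

lemma polys_below_monom: "a \<in> C \<Longrightarrow> i < k \<Longrightarrow> a * x ^ i \<in> polys_below C x k"
proof (rule polys_belowI[of "\<lambda>j. if j = i then a else 0"])
  show "(if j = i then a else 0) \<in> C" if "a \<in> C" for j using M that by (auto simp: ring_module_def)
  show "a * x ^ i = (\<Sum>j<k. (if j = i then a else 0) * x ^ j)" if "i < k"
  proof -
    have "(\<Sum>j<k. (if j = i then a else 0) * x ^ j) = (\<Sum>j<k. if i = j then a * x ^ j else 0)"
      by (rule sum.cong) auto
    thus ?thesis using that by simp
  qed
qed

lemma polys_below_sum:
  "finite A \<Longrightarrow> (\<And>j. j \<in> A \<Longrightarrow> f j \<in> polys_below C x k) \<Longrightarrow> sum f A \<in> polys_below C x k"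
  by (induction A rule: finite_induct) (auto intro: polys_below_zero polys_below_add)

lemma polys_below_mono: assumes "k \<le> k'" shows "polys_below C x k \<subseteq> polys_below C x k'"
proof
  fix p assume "p \<in> polys_below C x k"
  then obtain c where c: "\<forall>i. c i \<in> C" "p = (\<Sum>i<k. c i * x ^ i)" by (rule polys_belowE)
  have "p = (\<Sum>i<k. c i * x ^ i)" by (fact c(2))
  also have "\<dots> \<in> polys_below C x k'"
    using c(1) assms by (intro polys_below_sum polys_below_monom) auto
  finally show "p \<in> polys_below C x k'" .
qed

lemma polys_zero: "0 \<in> polys C x"
  using polys_below_zero unfolding polys_def by blast

lemma polys_add: assumes "p \<in> polys C x" "q \<in> polys C x" shows "p + q \<in> polys C x"
proof -
  obtain k k' where "p \<in> polys_below C x k" "q \<in> polys_below C x k'" using assms unfolding polys_def by blast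
  hence "p \<in> polys_below C x (max k k')" "q \<in> polys_below C x (max k k')"
    using polys_below_mono[of k "max k k'" x] polys_below_mono[of k' "max k k'" x] by auto
  thus ?thesis using polys_below_add unfolding polys_def by blast
qed

lemma polys_smult: "r \<in> R \<Longrightarrow> p \<in> polys C x \<Longrightarrow> r * p \<in> polys C x"
  using polys_below_smult unfolding polys_def by blast

lemma polys_monom: "a \<in> C \<Longrightarrow> a * x ^ i \<in> polys C x"
  using polys_below_monom[of a i "Suc i"] unfolding polys_def by blast

lemma polys_sum: "finite A \<Longrightarrow> (\<And>j. j \<in> A \<Longrightarrow> f j \<in> polys C x) \<Longrightarrow> sum f A \<in> polys C x"
  by (induction A rule: finite_induct) (auto intro: polys_zero polys_add)

lemma polys_mult_ring: assumes "p \<in> polys C x" "q \<in> polys R x"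
  shows "p * q \<in> polys C x"
proof -
  have xp: "x ^ j * p \<in> polys C x" for j
  proof -
    obtain k where "p \<in> polys_below C x k" using assms(1) unfolding polys_def by blast
    then obtain c where c: "\<forall>i. c i \<in> C" "p = (\<Sum>i<k. c i * x ^ i)" by (rule polys_belowE)
    have "x ^ j * p = (\<Sum>i<k. c i * x ^ (i + j))" using c(2) by (simp add: sum_distrib_left power_add mult_ac)
    thus ?thesis using c(1) by (auto intro: polys_sum polys_monom)
  qed
  obtain k where "q \<in> polys_below R x k" using assms(2) unfolding polys_def by blast
  then obtain c where c: "\<forall>i. c i \<in> R" "q = (\<Sum>i<k. c i * x ^ i)" by (rule polys_belowE)
  have "(\<Sum>i<k. c i * (x ^ i * p)) \<in> polys C x"
    using c(1) by (intro polys_sum) (auto intro: polys_smult xp)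
  thus ?thesis using c(2) by (simp add: sum_distrib_left mult_ac)
qed

end

lemma ring_module_ring: "subring R \<Longrightarrow> ring_module R R"
  unfolding ring_module_def using subringD by auto

lemma polys_subring:
  assumes R: "subring R"
  shows "subring (polys R x)" "R \<subseteq> polys R x" "x \<in> polys R x"
proof -
  have M: "ring_module R R" using ring_module_ring R .
  have sub: "R \<subseteq> polys R x" using polys_monom[OF M, of _ x 0] by auto
  have neg: "- p \<in> polys R x" if "p \<in> polys R x" for p
    using polys_smult[OF M subring_uminus[OF R subringD(2)[OF R]] that] by simp
  show "subring (polys R x)" unfolding subring_def
    using sub subringD(1,2)[OF R] polys_add[OF M] polys_add[OF M _ neg] polys_mult_ring[OF M] by auto
  show "R \<subseteq> polys R x" by (rule sub)
  show "x \<in> polys R x" using polys_monom[OF M subringD(2)[OF R], of x 1] by simp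
qed

text \<open>Degree reduction: let \<open>J\<close> be a proper ideal of \<open>R\<close>, and suppose \<open>1 = \<Sum>\<^sub>i\<^sub><\<^sub>n a\<^sub>i x\<^sup>i\<close> and
  \<open>1 = \<Sum>\<^sub>i\<^sub><\<^sub>m b\<^sub>i x\<^sup>-\<^sup>i\<close> with all \<open>a\<^sub>i, b\<^sub>i \<in> J\<close> and \<open>m \<le> n\<close>. Multiplying the second relation
  by \<open>x\<^sup>n\<^sup>-\<^sup>1\<close> writes \<open>(1 - b\<^sub>0) x\<^sup>n\<^sup>-\<^sup>1\<close> with lower powers of \<open>x\<close>; multiplying the first relation
  by \<open>1 - b\<^sub>0\<close> and adding \<open>b\<^sub>0\<close> then yields a relation for \<open>x\<close> of length \<open>< n\<close>.\<close>

lemma polys_below_degree_reduction: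
  fixes x :: "'a::field"
  assumes R: "subring R" and J: "ring_module R J" "J \<subseteq> R" "1 \<notin> J" and x: "x \<noteq> 0"
    and mn: "m \<le> n" and a: "1 \<in> polys_below J x n" and b: "1 \<in> polys_below J (inverse x) m"
  shows "\<exists>n'. n' < n \<and> 1 \<in> polys_below J x n'"
proof -
  obtain bb where bb: "\<forall>i. bb i \<in> J" "1 = (\<Sum>i<m. bb i * inverse x ^ i)" using b by (rule polys_belowE)
  obtain aa where aa: "\<forall>i. aa i \<in> J" "1 = (\<Sum>i<n. aa i * x ^ i)" using a by (rule polys_belowE)
  have "m \<noteq> 0" using bb(2) by (metis lessThan_0 sum.empty zero_neq_one)
  moreover have "m \<noteq> 1"
  proof
    assume "m = 1"
    hence "bb 0 = 1" using bb(2) by simp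
    thus False using bb(1) J(3) by metis
  qed
  ultimately obtain m' where m': "m = Suc m'" "m' \<noteq> 0" by (cases m) auto
  obtain n' where n': "n = Suc n'" using mn m' by (cases n) auto
  have m'n': "m' \<le> n'" using mn m' n' by auto
  have bb0: "1 - bb 0 = (\<Sum>i<m'. bb (Suc i) * inverse x ^ Suc i)"
    using bb(2) unfolding m'(1) sum.lessThan_Suc_shift by (simp, metis add_diff_cancel_left')
  have "(1 - bb 0) * x ^ n' = (\<Sum>i<m'. bb (Suc i) * (x ^ n' * inverse x ^ Suc i))"
    by (simp add: bb0 sum_distrib_left sum_distrib_right mult_ac)
  also have "\<dots> = (\<Sum>i<m'. bb (Suc i) * x ^ (n' - Suc i))"
    using m'n' x by (intro sum.cong) (auto simp: power_diff power_inverse divide_inverse)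
  finally have top: "(1 - bb 0) * x ^ n' \<in> polys_below J x n'"
    using m'n' bb(1) by (auto intro!: polys_below_sum[OF J(1)] polys_below_monom[OF J(1)])
  have b0R: "1 - bb 0 \<in> R" using bb(1) J(2) subringD(2,4)[OF R] by blast
  have "1 = (\<Sum>i<n'. aa i * x ^ i) + aa n' * x ^ n'" using aa(2) n' by simp
  hence "1 - bb 0 = (1 - bb 0) * ((\<Sum>i<n'. aa i * x ^ i) + aa n' * x ^ n')" by simp
  also have "\<dots> = (1 - bb 0) * (\<Sum>i<n'. aa i * x ^ i) + aa n' * ((1 - bb 0) * x ^ n')"
    by (simp add: algebra_simps)
  also have "\<dots> \<in> polys_below J x n'"
  proof -
    have "(\<Sum>i<n'. aa i * x ^ i) \<in> polys_below J x n'" using aa(1) by (intro polys_belowI) auto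
    hence "(1 - bb 0) * (\<Sum>i<n'. aa i * x ^ i) \<in> polys_below J x n'"
      by (rule polys_below_smult[OF J(1) b0R])
    moreover have "aa n' * ((1 - bb 0) * x ^ n') \<in> polys_below J x n'"
      using J(2) aa(1) by (intro polys_below_smult[OF J(1) _ top]) auto
    ultimately show ?thesis by (rule polys_below_add[OF J(1)])
  qed
  finally have "1 - bb 0 \<in> polys_below J x n'" .
  moreover have "bb 0 \<in> polys_below J x n'"
    using polys_below_monom[OF J(1) bb(1)[rule_format, of 0], of 0 n' x] m'n' m'(2) by simp
  ultimately have "(1 - bb 0) + bb 0 \<in> polys_below J x n'" by (rule polys_below_add[OF J(1)])
  thus ?thesis using n'(1) by (intro exI[of _ n']) simp
qed

text \<open>Key lemma of Chevalley's extension theorem: for a proper ideal \<open>J\<close> of \<open>R\<close> and \<open>x \<noteq> 0\<close>,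
  \<open>1\<close> cannot lie both in \<open>J[x]\<close> and in \<open>J[x\<inverse>]\<close>. Proof by induction on the sum of the lengths
  of the two relations, symmetric in \<open>x\<close> and \<open>x\<inverse>\<close>.\<close>

lemma one_not_in_both_polys:
  fixes x :: "'a::field"
  assumes R: "subring R" and J: "ring_module R J" "J \<subseteq> R" "1 \<notin> J" and x: "x \<noteq> 0"
  shows "\<not> (1 \<in> polys J x \<and> 1 \<in> polys J (inverse x))"
proof -
  have "False" if "x \<noteq> 0" "1 \<in> polys_below J x n" "1 \<in> polys_below J (inverse x) m" for x :: 'a and n m
    using that
  proof (induction "n + m" arbitrary: x n m rule: less_induct)
    case less
    show False
    proof (cases "m \<le> n")
      case True
      then obtain n' where n': "n' < n" "1 \<in> polys_below J x n'"
        using polys_below_degree_reduction[OF R J less.prems(1) True less.prems(2,3)] by blast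
      show False by (rule less.hyps[OF _ less.prems(1) n'(2) less.prems(3)]) (use n'(1) in simp)
    next
      case False
      have x': "inverse x \<noteq> 0" and a: "1 \<in> polys_below J (inverse (inverse x)) n"
        using less.prems by simp_all
      obtain m' where m': "m' < m" "1 \<in> polys_below J (inverse x) m'"
        using polys_below_degree_reduction[OF R J x' _ less.prems(3) a] False by auto
      show False by (rule less.hyps[OF _ x' m'(2) a]) (use m'(1) in simp)
    qed
  qed
  thus ?thesis using x unfolding polys_def by blast
qed

section \<open>Chevalley's extension theorem\<close>

lemma prime_complement_nonzero: "prime_ideal S Q \<Longrightarrow> s \<notin> Q \<Longrightarrow> s \<noteq> 0"
  using prime_idealD(2) by blast

context
  fixes S Q :: "'a::field set"
  assumes S: "subring S" and Q: "prime_ideal S Q"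
begin

lemma prime_complement_mult: "s \<in> S \<Longrightarrow> s \<notin> Q \<Longrightarrow> t \<in> S \<Longrightarrow> t \<notin> Q \<Longrightarrow> s * t \<in> S \<and> s * t \<notin> Q"
  using prime_idealD(5)[OF Q] subringD(5)[OF S] by blast


lemma localization_subring: "subring (localization S Q)"
  unfolding subring_def
proof (intro conjI ballI)
  have "1 \<notin> Q" using prime_one[OF Q subringD(2)[OF S]] .
  thus "0 \<in> localization S Q" "1 \<in> localization S Q"
    unfolding localization_def using subringD(1,2)[OF S] by force+
  fix x y assume "x \<in> localization S Q" "y \<in> localization S Q"
  then obtain a s b t where x: "x = a / s" "a \<in> S" "s \<in> S" "s \<notin> Q"
    and y: "y = b / t" "b \<in> S" "t \<in> S" "t \<notin> Q" unfolding localization_def by blast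
  have st: "s * t \<in> S" "s * t \<notin> Q" using prime_complement_mult x y by auto
  have nz: "s \<noteq> 0" "t \<noteq> 0" using prime_complement_nonzero[OF Q] x y by auto
  have "x + y = (a * t + b * s) / (s * t)" "x - y = (a * t - b * s) / (s * t)" "x * y = (a * b) / (s * t)"
    using x y nz by (simp_all add: field_simps)
  moreover have "a * t + b * s \<in> S" "a * t - b * s \<in> S" "a * b \<in> S" using x y subringD[OF S] by simp_all
  ultimately show "x + y \<in> localization S Q" "x - y \<in> localization S Q" "x * y \<in> localization S Q"
    unfolding localization_def using st by blast+
qed

lemma subset_localization: "S \<subseteq> localization S Q"
  using prime_one[OF Q subringD(2)[OF S]] subringD(2)[OF S] unfolding localization_def by force

lemma inverse_in_localization: "s \<in> S \<Longrightarrow> s \<notin> Q \<Longrightarrow> inverse s \<in> localization S Q"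
  using subringD(2)[OF S] unfolding localization_def by (force simp: divide_inverse)

text \<open>The extension of \<open>Q\<close> to the localization is a proper ideal: it consists of fractions
  \<open>q / s\<close> with \<open>q \<in> Q\<close>, \<open>s \<notin> Q\<close>, and such a fraction is never \<open>1\<close>.\<close>

lemma one_notin_localized_prime: "1 \<notin> genset Q (localization S Q)"
proof -
  define QL where "QL = {a / s | a s. a \<in> Q \<and> s \<in> S \<and> s \<notin> Q}"
  have "genset Q (localization S Q) \<subseteq> QL"
  proof (rule genset_least)
    show "0 \<in> QL" unfolding QL_def using prime_idealD(2)[OF Q] subset_localization
        prime_one[OF Q subringD(2)[OF S]] subringD(2)[OF S] by force
    fix x y assume "x \<in> QL" "y \<in> QL"
    then obtain a s b t where x: "x = a / s" "a \<in> Q" "s \<in> S" "s \<notin> Q"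
      and y: "y = b / t" "b \<in> Q" "t \<in> S" "t \<notin> Q" unfolding QL_def by blast
    have "x + y = (a * t + b * s) / (s * t)"
      using x y prime_complement_nonzero[OF Q] by (simp add: field_simps)
    moreover have "a * t + b * s \<in> Q" using x y prime_idealD[OF Q] by (metis mult.commute)
    ultimately show "x + y \<in> QL" unfolding QL_def using prime_complement_mult x y by blast
  next
    fix e t assume e: "e \<in> Q" and "t \<in> localization S Q"
    then obtain a s where t: "t = a / s" "a \<in> S" "s \<in> S" "s \<notin> Q" unfolding localization_def by blast
    have "e * t = (a * e) / s" using t by simp
    thus "e * t \<in> QL" unfolding QL_def using prime_idealD(4)[OF Q t(2) e] t by blast
  qed
  moreover have "1 \<notin> QL"
    unfolding QL_def using prime_complement_nonzero[OF Q] by (auto simp: eq_divide_eq)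
  ultimately show ?thesis by blast
qed

end

lemma exists_maximal_avoiding_ring:
  assumes L: "subring L" "1 \<notin> genset Q L"
  obtains R where "subring R" "L \<subseteq> R" "1 \<notin> genset Q R"
    "\<And>R'. subring R' \<Longrightarrow> R \<subseteq> R' \<Longrightarrow> 1 \<notin> genset Q R' \<Longrightarrow> R' = R"
proof -
  define \<Sigma> where "\<Sigma> = {R. subring R \<and> L \<subseteq> R \<and> 1 \<notin> genset Q R}"
  have "\<exists>M\<in>\<Sigma>. \<forall>X\<in>\<Sigma>. M \<subseteq> X \<longrightarrow> X = M"
  proof (rule subset_Zorn_nonempty)
    show "\<Sigma> \<noteq> {}" using L unfolding \<Sigma>_def by blast
    fix C assume C: "C \<noteq> {}" "subset.chain \<Sigma> C"
    have CS: "C \<subseteq> \<Sigma>" and ch: "\<And>X Y. X \<in> C \<Longrightarrow> Y \<in> C \<Longrightarrow> X \<subseteq> Y \<or> Y \<subseteq> X"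
      using C(2) unfolding subset_chain_def by auto
    have "subring (\<Union>C)" using subring_Union_chain[OF C(1) ch] CS unfolding \<Sigma>_def by blast
    moreover have "L \<subseteq> \<Union>C" using C CS unfolding \<Sigma>_def by blast
    moreover have "1 \<notin> genset Q (\<Union>C)" using genset_Union_chain[OF C(1) ch] CS unfolding \<Sigma>_def by blast
    ultimately show "\<Union>C \<in> \<Sigma>" unfolding \<Sigma>_def by blast
  qed
  then obtain R where R\<Sigma>: "R \<in> \<Sigma>" and Rmax: "\<And>X. X \<in> \<Sigma> \<Longrightarrow> R \<subseteq> X \<Longrightarrow> X = R" by blast
  have R: "subring R" "L \<subseteq> R" "1 \<notin> genset Q R" using R\<Sigma> unfolding \<Sigma>_def by auto
  moreover have "R' = R" if "subring R'" "R \<subseteq> R'" "1 \<notin> genset Q R'" for R'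
    using Rmax that R(2) unfolding \<Sigma>_def by blast
  ultimately show ?thesis using that by blast
qed

lemma maximal_avoiding_adjoin:
  assumes R: "subring R" and QR: "Q \<subseteq> R"
    and max: "\<And>R'. subring R' \<Longrightarrow> R \<subseteq> R' \<Longrightarrow> 1 \<notin> genset Q R' \<Longrightarrow> R' = R"
    and y: "y \<notin> R"
  shows "1 \<in> polys (genset Q R) y"
proof -
  have J: "ring_module R (genset Q R)" unfolding ring_module_def
    using genset_zero genset_add genset_mult_left[OF _ R] by blast
  have "1 \<in> genset Q (polys R y)" using max polys_subring[OF R] y by blast
  moreover have "genset Q (polys R y) \<subseteq> polys (genset Q R) y"
  proof (rule genset_least)
    fix e p assume e: "e \<in> Q" and "p \<in> polys R y"
    hence "e \<in> polys (genset Q R) y" "p \<in> polys R y"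
      using polys_monom[OF J genset_gen[OF R e], of y 0] by simp_all
    thus "e * p \<in> polys (genset Q R) y" by (rule polys_mult_ring[OF J])
  qed (use polys_zero[OF J] polys_add[OF J] in auto)
  ultimately show ?thesis by blast
qed

lemma maximal_avoiding_valring:
  assumes R: "subring R" and QR: "Q \<subseteq> R" and R1: "1 \<notin> genset Q R"
    and max: "\<And>R'. subring R' \<Longrightarrow> R \<subseteq> R' \<Longrightarrow> 1 \<notin> genset Q R' \<Longrightarrow> R' = R"
  shows "valring R"
  unfolding valring_def
proof (intro conjI allI impI R)
  fix x :: 'a assume x: "x \<noteq> 0"
  have J: "ring_module R (genset Q R)" "genset Q R \<subseteq> R" unfolding ring_module_def
    using genset_zero genset_add genset_mult_left[OF _ R] genset_sub_ring[OF R QR] by blast+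
  show "x \<in> R \<or> inverse x \<in> R"
    using one_not_in_both_polys[OF R J R1 x] maximal_avoiding_adjoin[OF R QR max] by blast
qed

text \<open>Every prime ideal \<open>Q\<close> of a subring \<open>S\<close> is the centre \<open>m\<^sub>V \<inter> S\<close> of a valuation ring
  \<open>V \<supseteq> S\<close>: take \<open>V\<close> maximal (Zorn) among the rings containing \<open>S\<^sub>Q\<close> in which \<open>Q\<close> does not
  generate the unit ideal.\<close>

theorem chevalley:
  fixes S Q :: "'a::field set"
  assumes S: "subring S" and Q: "prime_ideal S Q"
  shows "\<exists>V. valring V \<and> S \<subseteq> V \<and> mV V \<inter> S = Q"
proof -
  obtain R where R: "subring R" "localization S Q \<subseteq> R" "1 \<notin> genset Q R"
    and Rmax: "\<And>R'. subring R' \<Longrightarrow> R \<subseteq> R' \<Longrightarrow> 1 \<notin> genset Q R' \<Longrightarrow> R' = R"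
    using exists_maximal_avoiding_ring[OF localization_subring[OF S Q] one_notin_localized_prime[OF S Q]]
    by blast
  have SR: "S \<subseteq> R" using subset_localization[OF S Q] R(2) by blast
  have QR: "Q \<subseteq> R" using prime_idealD(1)[OF Q] SR by blast
  have val: "valring R" by (rule maximal_avoiding_valring[OF R(1) QR R(3) Rmax])
  have "mV R \<inter> S \<subseteq> Q"
  proof
    fix s assume s: "s \<in> mV R \<inter> S"
    show "s \<in> Q"
    proof (rule ccontr)
      assume "s \<notin> Q"
      hence "inverse s \<in> R" "s \<noteq> 0"
        using inverse_in_localization[OF S Q] prime_complement_nonzero[OF Q] s R(2) by auto
      thus False using s unfolding mV_def by auto
    qed
  qed
  moreover have "Q \<subseteq> mV R"
  proof
    fix q assume q: "q \<in> Q"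
    have "inverse q \<notin> R" if "q \<noteq> 0"
      using genset_single[OF q, of "inverse q" R] R(3) that by auto
    thus "q \<in> mV R" using q QR unfolding mV_def by auto
  qed
  ultimately show ?thesis using val SR prime_idealD(1)[OF Q] by blast
qed

section \<open>Lifting chains of prime ideals to valuation rings\<close>

definition add_sets :: "'a::field set \<Rightarrow> 'a set \<Rightarrow> 'a set" where
  "add_sets A B = {a + b | a b. a \<in> A \<and> b \<in> B}"

lemma add_setsI: "a \<in> A \<Longrightarrow> b \<in> B \<Longrightarrow> a + b \<in> add_sets A B"
  unfolding add_sets_def by blast

lemma add_setsE:
  assumes "x \<in> add_sets A B"
  obtains a b where "x = a + b" "a \<in> A" "b \<in> B"
  using assms unfolding add_sets_def by blast

lemma valring_sub_of_mV_sup: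
  assumes V: "valring V" and W: "valring W" and m: "mV W \<subseteq> mV V"
  shows "V \<subseteq> W"
proof
  fix y assume y: "y \<in> V"
  show "y \<in> W"
  proof (rule ccontr)
    assume yW: "y \<notin> W"
    hence y0: "y \<noteq> 0" using subringD(1)[OF valring_subring[OF W]] by auto
    hence "inverse y \<in> W" using W yW unfolding valring_def by auto
    hence "inverse y \<in> mV W" using yW y0 unfolding mV_def by auto
    hence "inverse y \<in> mV V" using m by blast
    thus False using y y0 unfolding mV_def by auto
  qed
qed

context
  fixes W T :: "'a::field set"
  assumes W: "valring W" and T: "subring T" and TW: "T \<subseteq> W"
begin

lemma add_mV_subring: "subring (add_sets T (mV W))"
  unfolding subring_def
proof (intro conjI ballI)
  show "0 \<in> add_sets T (mV W)" "1 \<in> add_sets T (mV W)"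
    using add_setsI[OF subringD(1)[OF T] mV_zero[OF W]] add_setsI[OF subringD(2)[OF T] mV_zero[OF W]]
    by simp_all
  fix x y assume "x \<in> add_sets T (mV W)" "y \<in> add_sets T (mV W)"
  then obtain t m t' m' where x: "x = t + m" "t \<in> T" "m \<in> mV W"
    and y: "y = t' + m'" "t' \<in> T" "m' \<in> mV W" by (metis add_setsE)
  have "x + y = (t + t') + (m + m')" "x - y = (t - t') + (m - m')"
    "x * y = t * t' + (t * m' + t' * m + m * m')" using x y by (simp_all add: algebra_simps)
  moreover have "t + t' \<in> T" "t - t' \<in> T" "t * t' \<in> T" using x y subringD[OF T] by simp_all
  moreover have "m + m' \<in> mV W" "m - m' \<in> mV W" using x y mV_add[OF W] mV_diff[OF W] by auto
  moreover have "t * m' + t' * m + m * m' \<in> mV W"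
    using x y TW by (intro mV_cross_terms[OF W]) auto
  ultimately show "x + y \<in> add_sets T (mV W)" "x - y \<in> add_sets T (mV W)" "x * y \<in> add_sets T (mV W)"
    by (simp_all add: add_setsI)
qed

context
  fixes P :: "'a::field set"
  assumes P: "prime_ideal T P" and centre: "mV W \<inter> T \<subseteq> P"
begin

lemma add_mV_contract: "add_sets P (mV W) \<inter> T = P"
proof
  show "P \<subseteq> add_sets P (mV W) \<inter> T"
    using add_setsI[OF _ mV_zero[OF W], of _ P] prime_idealD(1)[OF P] by auto
  show "add_sets P (mV W) \<inter> T \<subseteq> P"
  proof
    fix x assume "x \<in> add_sets P (mV W) \<inter> T"
    then obtain p m where x: "x = p + m" "p \<in> P" "m \<in> mV W" "x \<in> T" by (metis IntE add_setsE)
    have "m = x - p" using x by simp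
    moreover have "x - p \<in> T" using x prime_idealD(1)[OF P] subringD(4)[OF T] by blast
    ultimately have "m \<in> P" using centre x by auto
    thus "x \<in> P" using x prime_idealD(3)[OF P] by simp
  qed
qed

lemma add_mV_prime: "prime_ideal (add_sets T (mV W)) (add_sets P (mV W))"
  unfolding prime_ideal_def
proof (intro conjI ballI impI)
  note PD = prime_idealD[OF P]
  show "add_sets P (mV W) \<subseteq> add_sets T (mV W)" using PD(1) unfolding add_sets_def by blast
  show "0 \<in> add_sets P (mV W)" using add_setsI[OF PD(2) mV_zero[OF W]] by simp
  have "1 \<notin> add_sets P (mV W)"
    using add_mV_contract prime_one[OF P subringD(2)[OF T]] subringD(2)[OF T] by blast
  thus "add_sets P (mV W) \<noteq> add_sets T (mV W)"
    using add_setsI[OF subringD(2)[OF T] mV_zero[OF W]] by auto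
next
  fix x y assume "x \<in> add_sets P (mV W)" "y \<in> add_sets P (mV W)"
  then obtain p m p' m' where x: "x = p + m" "p \<in> P" "m \<in> mV W"
    and y: "y = p' + m'" "p' \<in> P" "m' \<in> mV W" by (metis add_setsE)
  have "x + y = (p + p') + (m + m')" using x y by simp
  thus "x + y \<in> add_sets P (mV W)" using x y prime_idealD(3)[OF P] mV_add[OF W] add_setsI by metis
next
  fix r x assume "r \<in> add_sets T (mV W)" "x \<in> add_sets P (mV W)"
  then obtain t m p m' where r: "r = t + m" "t \<in> T" "m \<in> mV W"
    and x: "x = p + m'" "p \<in> P" "m' \<in> mV W" by (metis add_setsE)
  have "r * x = t * p + (t * m' + p * m + m * m')" using x r by (simp add: algebra_simps)
  moreover have "t * p \<in> P" using prime_idealD(4)[OF P] r x by blast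
  moreover have "t * m' + p * m + m * m' \<in> mV W"
    using mV_cross_terms[OF W _ _ r(3) x(3)] r(2) x(2) TW prime_idealD(1)[OF P] by blast
  ultimately show "r * x \<in> add_sets P (mV W)" by (simp add: add_setsI)
next
  fix a b assume "a \<in> add_sets T (mV W)" "b \<in> add_sets T (mV W)" "a * b \<in> add_sets P (mV W)"
  then obtain t m t' m' p m'' where a: "a = t + m" "t \<in> T" "m \<in> mV W"
    and b: "b = t' + m'" "t' \<in> T" "m' \<in> mV W" and ab: "a * b = p + m''" "p \<in> P" "m'' \<in> mV W"
    by (metis add_setsE)
  text \<open>\<open>t t'\<close> differs from \<open>a b\<close> by an element of \<open>m\<^sub>W\<close>, so it lies in \<open>(P + m\<^sub>W) \<inter> T = P\<close>.\<close>
  define n where "n = t * m' + t' * m + m * m'"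
  have n: "n \<in> mV W" unfolding n_def using mV_cross_terms[OF W _ _ a(3) b(3)] a(2) b(2) TW by blast
  have "t * t' = p + (m'' - n)" using a b ab unfolding n_def by (simp add: algebra_simps)
  hence "t * t' \<in> add_sets P (mV W)" using ab n mV_diff[OF W] add_setsI by metis
  moreover have "t * t' \<in> T" using a b subringD(5)[OF T] by auto
  ultimately have "t * t' \<in> P" using add_mV_contract by blast
  hence "t \<in> P \<or> t' \<in> P" using prime_idealD(5)[OF P] a b by blast
  thus "a \<in> add_sets P (mV W) \<or> b \<in> add_sets P (mV W)" using a b add_setsI by metis
qed

text \<open>Apply Chevalley's theorem to the prime \<open>P + m\<^sub>W\<close> of \<open>T + m\<^sub>W\<close>.\<close>

lemma valring_centre_below:
  "\<exists>V. valring V \<and> T \<subseteq> V \<and> V \<subseteq> W \<and> mV V \<inter> T = P"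
proof -
  obtain V where V: "valring V" "add_sets T (mV W) \<subseteq> V" "mV V \<inter> add_sets T (mV W) = add_sets P (mV W)"
    using chevalley[OF add_mV_subring add_mV_prime] by blast
  have TS: "T \<subseteq> add_sets T (mV W)" using add_setsI[OF _ mV_zero[OF W], of _ T] by auto
  have mS: "mV W \<subseteq> add_sets P (mV W)" using add_setsI[OF prime_idealD(2)[OF P]] by force
  have "mV W \<subseteq> add_sets T (mV W)" using add_setsI[OF subringD(1)[OF T]] by force
  hence "mV W \<subseteq> mV V" using V(3) mS by blast
  hence "V \<subseteq> W" by (rule valring_sub_of_mV_sup[OF V(1) W])
  moreover have "mV V \<inter> T = P" using V(3) TS add_mV_contract by blast
  ultimately show ?thesis using V(1,2) TS by blast
qed

end

end

text \<open>A chain \<open>P\<^sub>0 \<subseteq> \<dots> \<subseteq> P\<^sub>k\<close> of primes of \<open>T\<close> is the trace on \<open>T\<close> of a chain of primes of a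
  single valuation ring \<open>V \<supseteq> T\<close> ending in \<open>m\<^sub>V\<close>; built by going down one step at a time.\<close>

lemma valring_over_prime_chain:
  fixes T :: "'a::field set" and P :: "nat \<Rightarrow> 'a set"
  assumes T: "subring T" and P: "\<forall>i\<le>n. prime_ideal T (P i)" and mono: "\<forall>i<n. P i \<subseteq> P (Suc i)"
  shows "k \<le> n \<Longrightarrow> \<exists>V Q. valring V \<and> T \<subseteq> V \<and> (\<forall>i\<le>k. prime_ideal V (Q i) \<and> Q i \<inter> T = P i)
     \<and> (\<forall>i<k. Q i \<subseteq> Q (Suc i)) \<and> Q k = mV V"
proof (induction k)
  case 0
  have P0: "prime_ideal T (P 0)" using P by simp
  have "mV UNIV \<inter> T \<subseteq> P 0" unfolding mV_UNIV using prime_idealD(2)[OF P0] by blast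
  then obtain V where V: "valring V" "T \<subseteq> V" "mV V \<inter> T = P 0"
    using valring_centre_below[OF valring_UNIV T subset_UNIV P0] by blast
  thus ?case using mV_prime[OF V(1)] by (intro exI[of _ V] exI[of _ "\<lambda>_. mV V"]) simp
next
  case (Suc k)
  then obtain V Q where V: "valring V" "T \<subseteq> V" "\<forall>i\<le>k. prime_ideal V (Q i) \<and> Q i \<inter> T = P i"
    "\<forall>i<k. Q i \<subseteq> Q (Suc i)" "Q k = mV V" by auto
  have "P k \<subseteq> P (Suc k)" using mono Suc.prems by simp
  hence centre: "mV V \<inter> T \<subseteq> P (Suc k)" using V(3,5) by auto
  have PS: "prime_ideal T (P (Suc k))" using P Suc.prems by simp
  obtain V' where V': "valring V'" "T \<subseteq> V'" "V' \<subseteq> V" "mV V' \<inter> T = P (Suc k)"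
    using valring_centre_below[OF V(1) T V(2) PS centre] by blast
  define Q' where "Q' = Q(Suc k := mV V')"
  have "prime_ideal V' (Q' i) \<and> Q' i \<inter> T = P i" if "i \<le> Suc k" for i
  proof (cases "i = Suc k")
    case True thus ?thesis using V'(4) mV_prime[OF V'(1)] by (simp add: Q'_def)
  next
    case False
    hence "i \<le> k" "Q' i = Q i" using that by (auto simp: Q'_def)
    thus ?thesis using V(3) prime_down[OF V'(1) V(1) V'(3)] by simp
  qed
  moreover have "Q' i \<subseteq> Q' (Suc i)" if "i < Suc k" for i
    using that V(4,5) mV_anti[OF V'(1) V'(3)] by (cases "i = k") (auto simp: Q'_def)
  ultimately show ?case using V'(1,2) by (intro exI[of _ V'] exI[of _ Q']) (simp add: Q'_def)
qed

lemma valring_over_strict_chain: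
  fixes T :: "'a::field set" and P :: "nat \<Rightarrow> 'a set"
  assumes T: "subring T" and P: "\<forall>i\<le>n. prime_ideal T (P i)" and mono: "\<forall>i<n. P i \<subset> P (Suc i)"
  shows "\<exists>V. valring V \<and> T \<subseteq> V \<and> enat n \<le> krull_dim V"
proof -
  have "\<forall>i<n. P i \<subseteq> P (Suc i)" using mono by blast
  then obtain V Q where V: "valring V" "T \<subseteq> V" "\<forall>i\<le>n. prime_ideal V (Q i) \<and> Q i \<inter> T = P i"
    "\<forall>i<n. Q i \<subseteq> Q (Suc i)"
    using valring_over_prime_chain[OF T P _ order_refl] by blast
  have "Q i \<subset> Q (Suc i)" if "i < n" for i
  proof -
    have "Q i \<inter> T = P i" "Q (Suc i) \<inter> T = P (Suc i)" using V(3) that by auto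
    hence "Q i \<noteq> Q (Suc i)" using mono that by auto
    thus ?thesis using V(4) that by auto
  qed
  hence "enat n \<in> {enat n | n. \<exists>P. (\<forall>i\<le>n. prime_ideal V (P i)) \<and> (\<forall>i<n. P i \<subset> P (Suc i))}"
    using V(3) by blast
  hence "enat n \<le> krull_dim V" unfolding krull_dim_def by (rule Sup_upper)
  thus ?thesis using V by blast
qed

section \<open>Semistar operations and quasi-\<open>\<star>\<^sub>f\<close>-ideals\<close>

lemma FbarI:
  "0 \<in> E \<Longrightarrow> E \<noteq> {0} \<Longrightarrow> (\<And>x y. x \<in> E \<Longrightarrow> y \<in> E \<Longrightarrow> x + y \<in> E) \<Longrightarrow>
    (\<And>d x. d \<in> D \<Longrightarrow> x \<in> E \<Longrightarrow> d * x \<in> E) \<Longrightarrow> E \<in> Fbar D"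
  unfolding Fbar_def by blast

lemma FbarD:
  assumes "E \<in> Fbar D"
  shows "0 \<in> E" "E \<noteq> {0}" "x \<in> E \<Longrightarrow> y \<in> E \<Longrightarrow> x + y \<in> E" "d \<in> D \<Longrightarrow> x \<in> E \<Longrightarrow> d * x \<in> E"
  using assms unfolding Fbar_def by blast+

lemma D_Fbar: "subring D \<Longrightarrow> D \<in> Fbar D"
  using subringD[of D] by (intro FbarI) auto

lemma genset_Fbar: "subring D \<Longrightarrow> genset G D \<noteq> {0} \<Longrightarrow> genset G D \<in> Fbar D"
  by (intro FbarI genset_zero genset_add genset_mult_left) auto

lemma fD_Fbar: "subring D \<Longrightarrow> F \<in> fD D \<Longrightarrow> F \<in> Fbar D"
  unfolding fD_def using genset_Fbar[of D] by auto

lemma fD_I: "finite G \<Longrightarrow> genset G D \<noteq> {0} \<Longrightarrow> genset G D \<in> fD D"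
  unfolding fD_def by blast

lemma fD_E:
  assumes "F \<in> fD D"
  obtains G where "finite G" "F = genset G D" "F \<noteq> {0}"
  using assms unfolding fD_def by blast

lemma Fbar_genset_sub:
  assumes J: "J \<in> Fbar D" and G: "G \<subseteq> J" shows "genset G D \<subseteq> J"
proof (rule genset_least)
  fix e t assume "e \<in> G" "t \<in> D"
  thus "e * t \<in> J" using FbarD(4)[OF J \<open>t \<in> D\<close>, of e] G by (auto simp: mult.commute)
qed (use FbarD[OF J] in auto)

lemma semistarD:
  assumes "semistar D st"
  shows "E \<in> Fbar D \<Longrightarrow> st E \<in> Fbar D"
    "E \<in> Fbar D \<Longrightarrow> F \<in> Fbar D \<Longrightarrow> E \<subseteq> F \<Longrightarrow> st E \<subseteq> st F"
    "E \<in> Fbar D \<Longrightarrow> E \<subseteq> st E" "E \<in> Fbar D \<Longrightarrow> st (st E) = st E"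
  using assms unfolding semistar_def by simp_all

lemma star_genset_sub:
  assumes st: "semistar D st" and E: "E \<in> Fbar D" and F: "genset G D \<in> Fbar D" and G: "G \<subseteq> st E"
  shows "st (genset G D) \<subseteq> st E"
proof -
  have sE: "st E \<in> Fbar D" by (rule semistarD(1)[OF st E])
  have "genset G D \<subseteq> st E" by (rule Fbar_genset_sub[OF sE G])
  hence "st (genset G D) \<subseteq> st (st E)" by (rule semistarD(2)[OF st F sE])
  thus ?thesis using semistarD(4)[OF st E] by simp
qed

lemma one_in_star_eq:
  assumes D: "subring D" and st: "semistar D st" and F: "F \<in> Fbar D" "F \<subseteq> D" and one: "1 \<in> st F"
  shows "st F = st D"
proof
  show "st F \<subseteq> st D" by (rule semistarD(2)[OF st F(1) D_Fbar[OF D] F(2)])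
  have "D \<subseteq> st F" using FbarD(4)[OF semistarD(1)[OF st F(1)] _ one] by auto
  hence "st D \<subseteq> st (st F)" using semistarD(2)[OF st D_Fbar[OF D] semistarD(1)[OF st F(1)]] by blast
  thus "st D \<subseteq> st F" using semistarD(4)[OF st F(1)] by simp
qed

lemma star_f_I: "F \<in> fD D \<Longrightarrow> F \<subseteq> E \<Longrightarrow> x \<in> st F \<Longrightarrow> x \<in> star_f D st E"
  unfolding star_f_def by blast

lemma star_f_E:
  assumes "x \<in> star_f D st E"
  obtains F where "F \<in> fD D" "F \<subseteq> E" "x \<in> st F"
  using assms unfolding star_f_def by blast

lemma Fbar_sub_star_f:
  assumes D: "subring D" and st: "semistar D st" and J: "J \<in> Fbar D"
  shows "J \<subseteq> star_f D st J"
proof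
  fix x assume x: "x \<in> J"
  obtain y where y: "y \<in> J" "y \<noteq> 0" using FbarD(1,2)[OF J] by blast
  define F where "F = genset {x, y} D"
  have xyF: "x \<in> F" "y \<in> F" unfolding F_def using genset_gen[OF D] by auto
  hence "F \<in> fD D" unfolding F_def using y(2) by (intro fD_I) auto
  moreover have "F \<subseteq> J" unfolding F_def using x y by (intro Fbar_genset_sub[OF J]) auto
  moreover have "x \<in> st F" using xyF semistarD(3)[OF st fD_Fbar[OF D \<open>F \<in> fD D\<close>]] by blast
  ultimately show "x \<in> star_f D st J" by (rule star_f_I)
qed

lemma quasi_not_one:
  assumes "quasi_star_f_ideal D st M" "M \<noteq> D" shows "1 \<notin> M"
proof
  assume "1 \<in> M"
  have "M \<in> Fbar D" "M \<subseteq> D" using assms unfolding quasi_star_f_ideal_def by auto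
  hence "D \<subseteq> M" using FbarD(4)[OF \<open>M \<in> Fbar D\<close> _ \<open>1 \<in> M\<close>] by auto
  thus False using assms \<open>M \<subseteq> D\<close> by auto
qed

text \<open>If \<open>F \<subseteq> D\<close> is finitely generated with \<open>F\<^sup>\<star> = D\<^sup>\<star>\<close>, then \<open>F\<close> is contained in no
  \<open>M \<in> QMax\<^sup>\<star>\<^sup>f(D)\<close>, so \<open>1 \<in> F D\<^sub>M\<close> for all such \<open>M\<close>, i.e.\ \<open>1 \<in> F\<^sup>\<star>\<^sup>~\<close>.\<close>

lemma one_in_star_tilde:
  assumes D: "subring D" and st: "semistar D st" and F: "F \<in> fD D" "F \<subseteq> D" "st F = st D"
  shows "1 \<in> star_tilde D st F"
  unfolding star_tilde_def
proof
  fix M assume "M \<in> QMax D st"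
  hence Mq: "quasi_star_f_ideal D st M" "M \<noteq> D" unfolding QMax_def by auto
  have MF: "M \<in> Fbar D" "star_f D st M \<inter> D = M" using Mq unfolding quasi_star_f_ideal_def by auto
  have "\<not> F \<subseteq> M"
  proof
    assume "F \<subseteq> M"
    have "1 \<in> st F" using semistarD(3)[OF st D_Fbar[OF D]] subringD(2)[OF D] F(3) by auto
    hence "1 \<in> M" using star_f_I[OF F(1) \<open>F \<subseteq> M\<close>] MF(2) subringD(2)[OF D] by blast
    thus False using quasi_not_one[OF Mq] by blast
  qed
  then obtain f where f: "f \<in> F" "f \<notin> M" by blast
  have f0: "f \<noteq> 0" using f FbarD(1)[OF MF(1)] by auto
  have "1 / f \<in> localization D M" unfolding localization_def
    using F(2) f subringD(2)[OF D] by blast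
  hence "f * (1 / f) \<in> genset F (localization D M)" using genset_single f by blast
  thus "1 \<in> genset F (localization D M)" using f0 by simp
qed

text \<open>Adjoining to \<open>M\<close> an element \<open>x \<in> M\<^sup>\<star>\<^sup>f\<close> does not change \<open>M\<^sup>\<star>\<^sup>f\<close>: the finitely many
  generators of a finitely generated \<open>F \<subseteq> M + xD\<close>, together with a finitely generated
  \<open>F\<^sub>1 \<subseteq> M\<close> with \<open>x \<in> F\<^sub>1\<^sup>\<star>\<close>, produce \<open>F\<^sub>2 \<subseteq> M\<close> with \<open>F\<^sup>\<star> \<subseteq> F\<^sub>2\<^sup>\<star>\<close>.\<close>

lemma star_f_adjoin:
  assumes D: "subring D" and st: "semistar D st" and M: "M \<in> Fbar D" and x: "x \<in> star_f D st M"
  shows "star_f D st (add_sets M (scale x D)) \<subseteq> star_f D st M"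
proof
  fix y assume "y \<in> star_f D st (add_sets M (scale x D))"
  then obtain F where F: "F \<in> fD D" "F \<subseteq> add_sets M (scale x D)" "y \<in> st F" by (rule star_f_E)
  obtain G where G: "finite G" "F = genset G D" using fD_E[OF F(1)] by blast
  obtain F1 where F1: "F1 \<in> fD D" "F1 \<subseteq> M" "x \<in> st F1" using x by (rule star_f_E)
  obtain G1 where G1: "finite G1" "F1 = genset G1 D" "F1 \<noteq> {0}" using fD_E[OF F1(1)] by blast
  have "\<forall>g\<in>G. \<exists>m d. m \<in> M \<and> d \<in> D \<and> g = m + x * d"
    using genset_supset[OF D, of G] G(2) F(2) unfolding add_sets_def scale_def by blast
  then obtain mg where mg: "\<forall>g\<in>G. mg g \<in> M \<and> (\<exists>d. d \<in> D \<and> g = mg g + x * d)"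
    by metis
  define F2 where "F2 = genset (mg ` G \<union> G1) D"
  have F1F2: "F1 \<subseteq> F2" unfolding F2_def G1(2) by (rule genset_mono) auto
  have F2M: "F2 \<subseteq> M" unfolding F2_def
    using mg genset_supset[OF D, of G1] G1(2) F1(2) by (intro Fbar_genset_sub[OF M]) auto
  have "F2 \<noteq> {0}" using F1F2 G1(3) FbarD(1)[OF fD_Fbar[OF D F1(1)]] by blast
  hence F2f: "F2 \<in> fD D" unfolding F2_def using G(1) G1(1) by (intro fD_I) auto
  have F2F: "F2 \<in> Fbar D" and sF2: "st F2 \<in> Fbar D" using fD_Fbar[OF D F2f] semistarD(1)[OF st] by auto
  have xs: "x \<in> st F2" using semistarD(2)[OF st fD_Fbar[OF D F1(1)] F2F F1F2] F1(3) by blast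
  have "G \<subseteq> st F2"
  proof
    fix g assume g: "g \<in> G"
    then obtain d where d: "d \<in> D" "g = mg g + x * d" using mg by blast
    have "mg g \<in> F2" unfolding F2_def using g by (intro genset_gen[OF D]) auto
    hence "mg g \<in> st F2" using semistarD(3)[OF st F2F] by blast
    moreover have "d * x \<in> st F2" by (rule FbarD(4)[OF sF2 d(1) xs])
    ultimately have "mg g + d * x \<in> st F2" by (rule FbarD(3)[OF sF2])
    thus "g \<in> st F2" using d(2) by (simp add: mult.commute)
  qed
  hence "st F \<subseteq> st F2" using star_genset_sub[OF st F2F _ ] fD_Fbar[OF D F(1)] G(2) by simp
  thus "y \<in> star_f D st M" using F(3) star_f_I[OF F2f F2M] by blast
qed

lemma adjoin_Fbar:
  assumes D: "subring D" and M: "M \<in> Fbar D"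
  shows "add_sets M (scale x D) \<in> Fbar D" "M \<subseteq> add_sets M (scale x D)" "x \<in> add_sets M (scale x D)"
proof -
  have xD: "x * d \<in> scale x D" if "d \<in> D" for d unfolding scale_def using that by blast
  show sub: "M \<subseteq> add_sets M (scale x D)" using add_setsI[OF _ xD[OF subringD(1)[OF D]]] by auto
  show "x \<in> add_sets M (scale x D)"
    using add_setsI[OF FbarD(1)[OF M] xD[OF subringD(2)[OF D]]] by simp
  show "add_sets M (scale x D) \<in> Fbar D"
  proof (rule FbarI)
    show "0 \<in> add_sets M (scale x D)" "add_sets M (scale x D) \<noteq> {0}"
      using sub FbarD(1,2)[OF M] by auto
  next
    fix a b assume "a \<in> add_sets M (scale x D)" "b \<in> add_sets M (scale x D)"
    then obtain m d m' d' where a: "a = m + x * d" "m \<in> M" "d \<in> D"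
      and b: "b = m' + x * d'" "m' \<in> M" "d' \<in> D" unfolding add_sets_def scale_def by blast
    have "a + b = (m + m') + x * (d + d')" using a b by (simp add: algebra_simps)
    thus "a + b \<in> add_sets M (scale x D)"
      using FbarD(3)[OF M a(2) b(2)] xD[OF subringD(3)[OF D a(3) b(3)]] add_setsI by metis
  next
    fix c a assume c: "c \<in> D" and "a \<in> add_sets M (scale x D)"
    then obtain m d where a: "a = m + x * d" "m \<in> M" "d \<in> D" unfolding add_sets_def scale_def by blast
    have "c * a = c * m + x * (c * d)" using a by (simp add: algebra_simps)
    thus "c * a \<in> add_sets M (scale x D)"
      using FbarD(4)[OF M c a(2)] xD[OF subringD(5)[OF D c a(3)]] add_setsI by metis
  qed
qed

text \<open>An integral ideal maximal among those \<open>J\<close> with \<open>1 \<notin> J\<^sup>\<star>\<^sup>f\<close> is a quasi-\<open>\<star>\<^sub>f\<close>-ideal: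
  for \<open>x \<in> M\<^sup>\<star>\<^sup>f \<inter> D\<close>, the ideal \<open>M + xD\<close> still avoids \<open>1\<close>, hence equals \<open>M\<close>.\<close>

lemma maximal_avoiding_quasi:
  assumes D: "subring D" and st: "semistar D st" and M: "M \<in> Fbar D" "M \<subseteq> D" "1 \<notin> star_f D st M"
    and max: "\<And>J. J \<in> Fbar D \<Longrightarrow> J \<subseteq> D \<Longrightarrow> M \<subseteq> J \<Longrightarrow> 1 \<notin> star_f D st J \<Longrightarrow> J = M"
  shows "star_f D st M \<inter> D = M"
proof
  show "M \<subseteq> star_f D st M \<inter> D" using Fbar_sub_star_f[OF D st M(1)] M(2) by blast
  show "star_f D st M \<inter> D \<subseteq> M"
  proof
    fix x assume x: "x \<in> star_f D st M \<inter> D"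
    let ?M' = "add_sets M (scale x D)"
    have "?M' \<subseteq> D"
      using M(2) x subringD(3,5)[OF D] unfolding add_sets_def scale_def by blast
    moreover have "1 \<notin> star_f D st ?M'" using star_f_adjoin[OF D st M(1)] x M(3) by blast
    ultimately have "?M' = M" using max adjoin_Fbar[OF D M(1)] by blast
    thus "x \<in> M" using adjoin_Fbar(3)[OF D M(1), of x] by simp
  qed
qed

text \<open>Avoiding \<open>1\<close> under \<open>\<star>\<^sub>f\<close> is preserved by unions of chains of submodules, since
  \<open>\<star>\<^sub>f\<close> only looks at finitely generated submodules.\<close>

lemma Union_chain_avoiding:
  assumes D: "subring D" and C: "C \<noteq> {}" "\<And>X Y. X \<in> C \<Longrightarrow> Y \<in> C \<Longrightarrow> X \<subseteq> Y \<or> Y \<subseteq> X"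
    and mem: "\<And>J. J \<in> C \<Longrightarrow> J \<in> Fbar D" "\<And>J. J \<in> C \<Longrightarrow> 1 \<notin> star_f D st J"
  shows "\<Union>C \<in> Fbar D" "1 \<notin> star_f D st (\<Union>C)"
proof -
  obtain J0 where J0: "J0 \<in> C" using C(1) by blast
  show "\<Union>C \<in> Fbar D"
  proof (rule FbarI)
    show "0 \<in> \<Union>C" "\<Union>C \<noteq> {0}" using FbarD(1,2)[OF mem(1)[OF J0]] J0 by blast+
    fix x y assume "x \<in> \<Union>C" "y \<in> \<Union>C"
    then obtain W where W: "W \<in> C" "{x, y} \<subseteq> W"
      using finite_subset_Union_chain[OF _ C, of "{x, y}"] by blast
    show "x + y \<in> \<Union>C" using FbarD(3)[OF mem(1)[OF W(1)]] W by blast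
  next
    fix d x assume "d \<in> D" "x \<in> \<Union>C"
    thus "d * x \<in> \<Union>C" using FbarD(4)[OF mem(1)] by blast
  qed
  show "1 \<notin> star_f D st (\<Union>C)"
  proof
    assume "1 \<in> star_f D st (\<Union>C)"
    then obtain F where F: "F \<in> fD D" "F \<subseteq> \<Union>C" "1 \<in> st F" by (rule star_f_E)
    obtain G where G: "finite G" "F = genset G D" using fD_E[OF F(1)] by blast
    obtain J where J: "J \<in> C" "G \<subseteq> J"
      using finite_subset_Union_chain[OF G(1) C] genset_supset[OF D, of G] G(2) F(2) by blast
    have "F \<subseteq> J" using G(2) Fbar_genset_sub[OF mem(1)[OF J(1)] J(2)] by simp
    thus False using star_f_I[where st = st, OF F(1) \<open>F \<subseteq> J\<close> F(3)] mem(2)[OF J(1)] by blast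
  qed
qed

lemma exists_QMax:
  assumes D: "subring D" and st: "semistar D st" and P: "P \<in> Fbar D" "P \<subseteq> D"
    and P1: "1 \<notin> star_f D st P"
  shows "\<exists>M\<in>QMax D st. P \<subseteq> M"
proof -
  define Z where "Z = {J. J \<in> Fbar D \<and> J \<subseteq> D \<and> P \<subseteq> J \<and> 1 \<notin> star_f D st J}"
  have "\<exists>M\<in>Z. \<forall>X\<in>Z. M \<subseteq> X \<longrightarrow> X = M"
  proof (rule subset_Zorn_nonempty)
    show "Z \<noteq> {}" using P P1 unfolding Z_def by blast
    fix C assume C: "C \<noteq> {}" "subset.chain Z C"
    have ch: "\<And>X Y. X \<in> C \<Longrightarrow> Y \<in> C \<Longrightarrow> X \<subseteq> Y \<or> Y \<subseteq> X"
      using C(2) unfolding subset_chain_def by auto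
    have mem: "J \<in> Fbar D" "J \<subseteq> D" "P \<subseteq> J" "1 \<notin> star_f D st J" if "J \<in> C" for J
      using that C(2) unfolding Z_def subset_chain_def by auto
    have "\<Union>C \<in> Fbar D" "1 \<notin> star_f D st (\<Union>C)"
      using Union_chain_avoiding[OF D C(1) ch mem(1) mem(4)] by auto
    thus "\<Union>C \<in> Z" using mem(2,3) C(1) unfolding Z_def by blast
  qed
  then obtain M where MZ: "M \<in> Z" and Mmax: "\<And>X. X \<in> Z \<Longrightarrow> M \<subseteq> X \<Longrightarrow> X = M" by blast
  have M: "M \<in> Fbar D" "M \<subseteq> D" "P \<subseteq> M" "1 \<notin> star_f D st M" using MZ unfolding Z_def by auto
  have "star_f D st M \<inter> D = M"
  proof (rule maximal_avoiding_quasi[OF D st M(1,2,4)])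
    fix J assume "J \<in> Fbar D" "J \<subseteq> D" "M \<subseteq> J" "1 \<notin> star_f D st J"
    thus "J = M" using Mmax M(3) unfolding Z_def by blast
  qed
  hence quasi: "quasi_star_f_ideal D st M" unfolding quasi_star_f_ideal_def using M(1,2) by blast
  have "M \<noteq> D" using Fbar_sub_star_f[OF D st M(1)] M(4) subringD(2)[OF D] by blast
  moreover have "J = M" if "quasi_star_f_ideal D st J" "J \<noteq> D" "M \<subseteq> J" for J
  proof -
    have J: "J \<in> Fbar D" "J \<subseteq> D" "star_f D st J \<inter> D = J" using that(1) unfolding quasi_star_f_ideal_def by auto
    have "1 \<notin> star_f D st J" using quasi_not_one[OF that(1,2)] J(3) subringD(2)[OF D] by blast
    thus "J = M" using Mmax J(1,2) that(3) M(3) unfolding Z_def by blast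
  qed
  ultimately show ?thesis using quasi M(3) unfolding QMax_def by blast
qed

section \<open>\<open>\<star>\<^sup>~\<close>-valuation overrings versus \<open>(\<star>, d)\<close>-linked overrings\<close>

text \<open>Every \<open>\<star>\<^sup>~\<close>-valuation overring is linked: if \<open>F\<^sup>\<star> = D\<^sup>\<star>\<close> then
  \<open>1 \<in> F\<^sup>\<star>\<^sup>~ \<subseteq> F V\<close>, so \<open>F V = V\<close>.\<close>

lemma tilde_valuation_linked:
  assumes D: "subring D" and st: "semistar D st" and V: "star_tilde_valuation_overring D st V"
  shows "star_linked D st V"
proof -
  have Vo: "valuation_overring D V" and Vt: "\<And>F. F \<in> fD D \<Longrightarrow> star_tilde D st F \<subseteq> genset F V"
    using V unfolding star_tilde_valuation_overring_def by auto
  have val: "valring V" "D \<subseteq> V" using Vo valuation_overring_iff by auto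
  have "genset F V = V" if F: "F \<in> fD D" "F \<subseteq> D" "st F = st D" for F
  proof -
    have "1 \<in> genset F V" using one_in_star_tilde[OF D st F] Vt[OF F(1)] by blast
    thus ?thesis using genset_one_ring[OF _ valring_subring[OF val(1)]] val(2) F(2) by blast
  qed
  thus ?thesis using Vo unfolding star_linked_def valuation_overring_def by blast
qed

text \<open>The centre on \<open>D\<close> of a valuation ring over a linked overring \<open>T\<close> avoids \<open>1\<close> under \<open>\<star>\<^sub>f\<close>:
  otherwise some finitely generated \<open>F\<close> inside the centre has \<open>F\<^sup>\<star> = D\<^sup>\<star>\<close>, so
  \<open>T = F T \<subseteq> m\<^sub>V\<close>, which is absurd.\<close>

lemma linked_centre_avoids_one:
  assumes D: "subring D" and st: "semistar D st" and T: "star_linked D st T"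
    and V: "valring V" and TV: "T \<subseteq> V"
  shows "1 \<notin> star_f D st (mV V \<inter> D)"
proof
  assume "1 \<in> star_f D st (mV V \<inter> D)"
  then obtain F where F: "F \<in> fD D" "F \<subseteq> mV V \<inter> D" "1 \<in> st F" by (rule star_f_E)
  have Tsub: "subring T" using T unfolding star_linked_def overring_def by blast
  have "st F = st D" using one_in_star_eq[OF D st fD_Fbar[OF D F(1)] _ F(3)] F(2) by blast
  hence "genset F T = T" using T F(1,2) unfolding star_linked_def by blast
  moreover have "genset F T \<subseteq> mV V"
  proof (rule genset_least)
    fix e t assume "e \<in> F" "t \<in> T"
    thus "e * t \<in> mV V" using mV_mult[OF V, of t e] F(2) TV by (auto simp: mult.commute)
  qed (use mV_zero[OF V] mV_add[OF V] in auto)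
  ultimately show False using subringD(2)[OF Tsub] mV_one by blast
qed

lemma centre_Fbar:
  assumes D: "subring D" and V: "valring V" and DV: "D \<subseteq> V" and nz: "mV V \<inter> D \<noteq> {0}"
  shows "mV V \<inter> D \<in> Fbar D"
proof (rule FbarI)
  show "0 \<in> mV V \<inter> D" using mV_zero[OF V] subringD(1)[OF D] by blast
  fix x y assume "x \<in> mV V \<inter> D" "y \<in> mV V \<inter> D"
  thus "x + y \<in> mV V \<inter> D" using mV_add[OF V] subringD(3)[OF D] by blast
next
  fix d x assume "d \<in> D" "x \<in> mV V \<inter> D"
  thus "d * x \<in> mV V \<inter> D" using mV_mult[OF V] subringD(5)[OF D] DV by blast
qed (rule nz)

text \<open>A valuation overring with zero centre contains \<open>D\<^sub>(\<^sub>0\<^sub>) = K\<close>.\<close>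

lemma valring_zero_centre:
  assumes K: "quotient_field_is_UNIV D" and V: "valring V" and DV: "D \<subseteq> V" and z: "mV V \<inter> D \<subseteq> {0}"
  shows "V = UNIV"
proof -
  have "localization D {0} = UNIV"
    using K unfolding quotient_field_is_UNIV_def localization_def by blast
  thus ?thesis using localization_sub_valring[OF V DV z] by blast
qed

text \<open>Conversely, every valuation ring \<open>V\<close> over a linked overring is a \<open>\<star>\<^sup>~\<close>-valuation overring:
  its centre lies in some \<open>M \<in> QMax\<^sup>\<star>\<^sup>f(D)\<close>, and then \<open>D\<^sub>M \<subseteq> V\<close> gives \<open>F\<^sup>\<star>\<^sup>~ \<subseteq> F D\<^sub>M \<subseteq> F V\<close>.\<close>

lemma linked_valuation_tilde:
  assumes D: "subring D" and K: "quotient_field_is_UNIV D" and st: "semistar D st"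
    and T: "star_linked D st T" and V: "valring V" and TV: "T \<subseteq> V"
  shows "star_tilde_valuation_overring D st V"
proof -
  have DV: "D \<subseteq> V" using T TV unfolding star_linked_def overring_def by blast
  have "star_tilde D st F \<subseteq> genset F V" if F: "F \<in> fD D" for F
  proof (cases "mV V \<inter> D \<subseteq> {0}")
    case True
    have "genset F V = UNIV" unfolding valring_zero_centre[OF K V DV True]
      using FbarD(1,2)[OF fD_Fbar[OF D F]] by (intro genset_UNIV) auto
    thus ?thesis by simp
  next
    case False
    hence "mV V \<inter> D \<in> Fbar D" using centre_Fbar[OF D V DV] by blast
    then obtain M where M: "M \<in> QMax D st" "mV V \<inter> D \<subseteq> M"
      using exists_QMax[OF D st _ _ linked_centre_avoids_one[OF D st T V TV]] by blast
    have "star_tilde D st F \<subseteq> genset F (localization D M)"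
      unfolding star_tilde_def using M(1) by blast
    also have "\<dots> \<subseteq> genset F V"
      using localization_sub_valring[OF V DV M(2)] by (intro genset_mono) auto
    finally show ?thesis .
  qed
  thus ?thesis unfolding star_tilde_valuation_overring_def valuation_overring_iff using V DV by blast
qed

text \<open>The dimension of a linked overring \<open>T\<close> is bounded by \<open>\<star>\<^sup>~-dim\<^sub>v(D)\<close>: a chain of primes of
  \<open>T\<close> of length \<open>n\<close> yields a valuation ring \<open>V \<supseteq> T\<close> of dimension \<open>\<ge> n\<close>, which is a
  \<open>\<star>\<^sup>~\<close>-valuation overring.\<close>

lemma krull_dim_linked_le:
  assumes D: "subring D" and K: "quotient_field_is_UNIV D" and st: "semistar D st"
    and T: "star_linked D st T"
  shows "krull_dim T \<le> star_tilde_dim_v D st"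
  unfolding krull_dim_def
proof (rule Sup_least)
  fix z assume "z \<in> {enat n | n. \<exists>P. (\<forall>i\<le>n. prime_ideal T (P i)) \<and> (\<forall>i<n. P i \<subset> P (Suc i))}"
  then obtain n P where z: "z = enat n" "\<forall>i\<le>n. prime_ideal T (P i)" "\<forall>i<n. P i \<subset> P (Suc i)"
    by blast
  have Tsub: "subring T" using T unfolding star_linked_def overring_def by blast
  obtain V where V: "valring V" "T \<subseteq> V" "enat n \<le> krull_dim V"
    using valring_over_strict_chain[OF Tsub z(2,3)] by blast
  have "star_tilde_valuation_overring D st V" by (rule linked_valuation_tilde[OF D K st T V(1,2)])
  hence "krull_dim V \<le> star_tilde_dim_v D st" unfolding star_tilde_dim_v_def by (intro Sup_upper) blast
  thus "z \<le> star_tilde_dim_v D st" using z(1) V(3) by simp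
qed

theorem corollary4p3:
  fixes D :: "'a::field set" and st :: "'a set \<Rightarrow> 'a set"
  assumes "subring D" and "quotient_field_is_UNIV D" and "semistar D st"
  shows "star_tilde_dim_v D st = Sup {krull_dim T | T. star_linked D st T}"
proof (rule antisym)
  have "{krull_dim V | V. star_tilde_valuation_overring D st V} \<subseteq> {krull_dim T | T. star_linked D st T}"
    using tilde_valuation_linked[OF assms(1,3)] by blast
  thus "star_tilde_dim_v D st \<le> Sup {krull_dim T | T. star_linked D st T}"
    unfolding star_tilde_dim_v_def by (rule Sup_subset_mono)
  show "Sup {krull_dim T | T. star_linked D st T} \<le> star_tilde_dim_v D st"
    using krull_dim_linked_le[OF assms] by (intro Sup_least) blast
qed

end
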